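(* Let $n\in\mathbb{N}$, let $f\colon[0,1]^n\to[0,1]$ be an aggregation function, and let $\mathbf{a}=(a_0,\dots,a_{n-1})\in[0,1]^n$ with $\mathbf{a}\neq(0,\dots,0)$ and $\mathbf{a}\neq(1,\dots,1)$. Put $J_{\mathbf{a}}=\{i: a_i\neq0\}$ and define $h^f_{\mathbf{a}}(\mathbf{x})=G^n_{f(\mathbf{a})}(\mathbf{x})\wedge\bigwedge_{i\in J_{\mathbf{a}}}\chi_{a_i}(x_i)$. Then $h^f_{\mathbf{a}}$ is an aggregation function and for all $\mathbf{x}\in[0,1]^n$: $h^f_{\mathbf{a}}(\mathbf{x})=1$ if $\mathbf{x}=(1,\dots,1)$; $h^f_{\mathbf{a}}(\mathbf{x})=f(\mathbf{a})$ if $\mathbf{x}\ge\mathbf{a}$ (coordinatewise) and $\mathbf{x}\neq(1,\dots,1)$; and $h^f_{\mathbf{a}}(\mathbf{x})=0$ if $\mathbf{x}\not\ge\mathbf{a}$.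
   Context: An $n$-ary aggregation function on $[0,1]$ is a function $f\colon[0,1]^n\to[0,1]$ nondecreasing in each coordinate with $f(0,\dots,0)=0$ and $f(1,\dots,1)=1$. For $a\in[0,1]$, $\chi_a(x)=1$ if $x\ge a$ and $x\neq0$, and $\chi_a(x)=0$ otherwise. $\mathsf{Med}_b(x,y)$ is the median of $x,y,b$. For $b\in[0,1]$, $G^n_b\colon[0,1]^n\to[0,1]$ is defined inductively by $G^1_b(x_0)=\mathsf{Med}_b(\chi_0(x_0),\chi_1(x_0))$, $G^2_b(x_0,x_1)=\mathsf{Med}_b(\chi_0(x_0\vee x_1),\chi_1(x_0\wedge x_1))$, $G^{n+1}_b(x_0,\dots,x_n)=G^2_b(G^n_b(x_0,\dots,x_{n-1}),x_n)$ for $n\ge2$. *)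

theory Defs
  imports Main "HOL.Real"
begin

text \<open>Points of [0,1]^n are represented as real lists of length n (indices 0..n-1).\<close>

definition cube :: "nat \<Rightarrow> real list set" where
  "cube n = {x. length x = n \<and> set x \<subseteq> {0..1}}"

definition vle :: "real list \<Rightarrow> real list \<Rightarrow> bool" where
  "vle x y = list_all2 (\<le>) x y"

definition is_aggregation :: "nat \<Rightarrow> (real list \<Rightarrow> real) \<Rightarrow> bool" where
  "is_aggregation n f \<longleftrightarrow>
     (\<forall>x\<in>cube n. f x \<in> {0..1}) \<and>
     (\<forall>x\<in>cube n. \<forall>y\<in>cube n. vle x y \<longrightarrow> f x \<le> f y) \<and>
     f (replicate n 0) = 0 \<and> f (replicate n 1) = 1"

definition chi :: "real \<Rightarrow> real \<Rightarrow> real" where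
  "chi a x = (if x \<ge> a \<and> x \<noteq> 0 then 1 else 0)"

definition Med :: "real \<Rightarrow> real \<Rightarrow> real \<Rightarrow> real" where
  "Med b x y = max (min x y) (min (max x y) b)"

definition G1 :: "real \<Rightarrow> real \<Rightarrow> real" where
  "G1 b x0 = Med b (chi 0 x0) (chi 1 x0)"

definition G2 :: "real \<Rightarrow> real \<Rightarrow> real \<Rightarrow> real" where
  "G2 b x0 x1 = Med b (chi 0 (max x0 x1)) (chi 1 (min x0 x1))"

text \<open>G^n_b on a list of length n \<ge> 1:
  G^1 = G1, G^2 = G2, G^{n+1}(x_0..x_n) = G2 (G^n(x_0..x_{n-1})) x_n.\<close>
definition Gn :: "real \<Rightarrow> real list \<Rightarrow> real" where
  "Gn b xs = (if length xs = 1 then G1 b (xs ! 0)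
              else foldl (G2 b) (G2 b (xs ! 0) (xs ! 1)) (drop 2 xs))"

definition hfa :: "(real list \<Rightarrow> real) \<Rightarrow> real list \<Rightarrow> real list \<Rightarrow> real" where
  "hfa f a x = Min (insert (Gn (f a) x) {chi (a ! i) (x ! i) | i. i < length a \<and> a ! i \<noteq> 0})"

end

theory Submission
  imports Defs
begin

text \<open>On the cube, \<open>G\<^sup>n\<^sub>b\<close> takes just three values: \<open>0\<close> at the zero vector, \<open>1\<close> at the all-ones
  vector and \<open>b\<close> everywhere else, because one step of \<open>G\<^sup>2\<^sub>b\<close> maps these three values of a prefix
  and the next coordinate to the three values of the longer prefix. The minimum of the
  \<open>\<chi>\<^bsub>a_i\<^esub>(x_i)\<close>, \<open>i \<in> J\<^sub>a\<close>, is \<open>1\<close> if \<open>x \<ge> a\<close> and \<open>0\<close> otherwise. So \<open>h\<^sup>f\<^sub>a\<close> is the step function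
  with value \<open>1\<close> at the top, \<open>f(a)\<close> on the rest of the up-set of \<open>a\<close> and \<open>0\<close> off it; it is
  monotone since that up-set is upward closed, and it vanishes at the zero vector since
  \<open>a \<noteq> 0\<close>.\<close>

definition Gn_closed :: "real \<Rightarrow> real list \<Rightarrow> real" where
  "Gn_closed b xs = (if set xs \<subseteq> {0} then 0 else if set xs \<subseteq> {1} then 1 else b)"

lemma G2_Gn_closed_snoc:
  assumes "xs \<noteq> []" "set xs \<subseteq> {0..1}" "y \<in> {0..1}" "b \<in> {0..1}"
  shows "G2 b (Gn_closed b xs) y = Gn_closed b (xs @ [y])"
proof -
  obtain z where z: "z \<in> set xs" using assms(1) by (cases xs) auto
  then have "\<not> (set xs \<subseteq> {0} \<and> set xs \<subseteq> {1})" by auto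
  with assms z show ?thesis
    by (cases "set xs \<subseteq> {0}"; cases "set xs \<subseteq> {1}"; cases "y = 0"; cases "y = 1")
       (auto simp: Gn_closed_def G2_def Med_def chi_def max_def min_def)
qed

lemma foldl_G2_Gn_closed:
  assumes "xs \<noteq> []" "set xs \<subseteq> {0..1}" "set ys \<subseteq> {0..1}" "b \<in> {0..1}"
  shows "foldl (G2 b) (Gn_closed b xs) ys = Gn_closed b (xs @ ys)"
  using assms
proof (induction ys arbitrary: xs)
  case Nil
  then show ?case by simp
next
  case (Cons y ys)
  then have "foldl (G2 b) (Gn_closed b xs) (y # ys) = foldl (G2 b) (Gn_closed b (xs @ [y])) ys"
    by (simp add: G2_Gn_closed_snoc)
  also have "\<dots> = Gn_closed b (xs @ y # ys)"
    using Cons by (simp add: Cons.IH)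
  finally show ?case .
qed

lemma Gn_eq_Gn_closed:
  assumes "xs \<noteq> []" "set xs \<subseteq> {0..1}" "b \<in> {0..1}"
  shows "Gn b xs = Gn_closed b xs"
proof (cases "length xs = 1")
  case True
  then obtain x where "xs = [x]" by (cases xs) auto
  with assms show ?thesis
    by (auto simp: Gn_def G1_def Gn_closed_def Med_def chi_def max_def min_def)
next
  case False
  with assms(1) obtain x0 x1 rest where xs: "xs = x0 # x1 # rest"
    by (metis length_Cons list.exhaust list.size(3) One_nat_def)
  have "G2 b x0 x1 = Gn_closed b [x0, x1]"
    using assms xs
    by (cases "x0 = 0"; cases "x0 = 1"; cases "x1 = 0"; cases "x1 = 1")
       (auto simp: Gn_closed_def G2_def Med_def chi_def max_def min_def)
  then have "Gn b xs = foldl (G2 b) (Gn_closed b [x0, x1]) rest"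
    by (simp add: Gn_def xs)
  also have "\<dots> = Gn_closed b xs"
    using assms xs by (subst foldl_G2_Gn_closed) auto
  finally show ?thesis .
qed

lemma vle_trans: "vle x y \<Longrightarrow> vle y z \<Longrightarrow> vle x z"
  unfolding vle_def by (rule list_all2_trans[OF order_trans])

lemma vle_antisym: "vle x y \<Longrightarrow> vle y x \<Longrightarrow> x = y"
  unfolding vle_def by (rule list_all2_antisym[OF order_antisym])

lemma replicate_in_cube: "c \<in> {0..1} \<Longrightarrow> replicate n c \<in> cube n"
  by (auto simp: cube_def)

lemma cube_nth: "x \<in> cube n \<Longrightarrow> i < n \<Longrightarrow> x ! i \<in> {0..1}"
  by (auto simp: cube_def dest!: nth_mem)

lemma replicate_zero_vle: "x \<in> cube n \<Longrightarrow> vle (replicate n 0) x"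
  using cube_nth by (auto simp: cube_def vle_def list_all2_conv_all_nth)

lemma vle_replicate_one: "x \<in> cube n \<Longrightarrow> vle x (replicate n 1)"
  using cube_nth by (auto simp: cube_def vle_def list_all2_conv_all_nth)

lemma vle_replicate_zero_iff: "x \<in> cube n \<Longrightarrow> vle x (replicate n 0) \<longleftrightarrow> x = replicate n 0"
  using replicate_zero_vle vle_antisym by (auto simp: vle_def list_all2_refl)

lemma replicate_one_vle_iff: "y \<in> cube n \<Longrightarrow> vle (replicate n 1) y \<longleftrightarrow> y = replicate n 1"
  using vle_replicate_one vle_antisym by (auto simp: vle_def list_all2_refl)

definition step_at :: "real list \<Rightarrow> real \<Rightarrow> real list \<Rightarrow> real" where
  "step_at a c x = (if x = replicate (length a) 1 then 1 else if vle a x then c else 0)"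

lemma is_aggregation_cong:
  "(\<And>x. x \<in> cube n \<Longrightarrow> f x = g x) \<Longrightarrow> is_aggregation n f \<longleftrightarrow> is_aggregation n g"
  using replicate_in_cube[of 0 n] replicate_in_cube[of 1 n] by (simp add: is_aggregation_def)

lemma is_aggregation_step_at:
  assumes a: "a \<in> cube n" "a \<noteq> replicate n 0" and c: "c \<in> {0..1}"
  shows "is_aggregation n (step_at a c)"
  unfolding is_aggregation_def
proof (intro conjI ballI impI)
  have la: "length a = n" using a by (simp add: cube_def)
  show "step_at a c x \<in> {0..1}" for x
    using c by (simp add: step_at_def)
  show "step_at a c (replicate n 0) = 0"
    using a la vle_replicate_zero_iff by (auto simp: step_at_def)
  show "step_at a c (replicate n 1) = 1"
    using la by (simp add: step_at_def)
  fix x y assume x: "x \<in> cube n" and y: "y \<in> cube n" and "vle x y"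
  show "step_at a c x \<le> step_at a c y"
  proof (cases "y = replicate n 1")
    case True
    then show ?thesis
      using c la by (simp add: step_at_def)
  next
    case False
    then have "x \<noteq> replicate n 1"
      using y \<open>vle x y\<close> replicate_one_vle_iff by blast
    with False show ?thesis
      using c la vle_trans[OF _ \<open>vle x y\<close>] by (simp add: step_at_def)
  qed
qed

lemma Min_chi_coords:
  assumes a: "a \<in> cube n" and x: "x \<in> cube n" and v: "v \<in> {0..1}"
  shows "Min (insert v {chi (a ! i) (x ! i) | i. i < length a \<and> a ! i \<noteq> 0}) =
    (if vle a x then v else 0)"
proof -
  let ?S = "{chi (a ! i) (x ! i) | i. i < length a \<and> a ! i \<noteq> 0}"
  have "?S = (\<lambda>i. chi (a ! i) (x ! i)) ` {i. i < length a \<and> a ! i \<noteq> 0}"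
    by auto
  then have fin: "finite ?S" by simp
  have S01: "?S \<subseteq> {0, 1}"
    by (auto simp: chi_def)
  have coords: "length a = n" "length x = n" "\<forall>i<n. 0 \<le> a ! i \<and> 0 \<le> x ! i"
    using a x cube_nth by (auto simp: cube_def)
  show ?thesis
  proof (cases "vle a x")
    case True
    then have "?S \<subseteq> {1}"
      using coords by (force simp: chi_def vle_def list_all2_conv_all_nth)
    with fin v True show ?thesis
      by (intro Min_eqI) auto
  next
    case False
    then obtain i where "i < n" "\<not> a ! i \<le> x ! i"
      using coords by (auto simp: vle_def list_all2_conv_all_nth)
    then have "0 \<in> ?S"
      using coords by (auto simp: chi_def intro!: exI[of _ i])
    with fin v S01 False show ?thesis
      by (intro Min_eqI) auto
  qed
qed

lemma hfa_eq_step_at: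
  assumes a: "a \<in> cube n" "a \<noteq> replicate n 0" and fa: "f a \<in> {0..1}" and x: "x \<in> cube n"
  shows "hfa f a x = step_at a (f a) x"
proof -
  have la: "length a = n" and lx: "length x = n" and x01: "set x \<subseteq> {0..1}"
    using a x by (auto simp: cube_def)
  have "n \<noteq> 0"
    using a la by auto
  then have Gn_x: "Gn (f a) x = Gn_closed (f a) x"
    using Gn_eq_Gn_closed x01 fa lx by auto
  have "Gn_closed (f a) x \<in> {0..1}"
    using fa by (simp add: Gn_closed_def)
  then have "hfa f a x = (if vle a x then Gn_closed (f a) x else 0)"
    unfolding hfa_def Gn_x using Min_chi_coords a x by blast
  moreover have "set x \<subseteq> {c} \<longleftrightarrow> x = replicate n c" for c
    using lx by (metis in_set_replicate replicate_eqI singletonD singletonI subsetI subsetD)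
  moreover have "vle a x \<Longrightarrow> x \<noteq> replicate n 0"
    using a vle_replicate_zero_iff by blast
  ultimately show ?thesis
    using \<open>n \<noteq> 0\<close> vle_replicate_one[OF a(1)] by (auto simp: step_at_def Gn_closed_def la)
qed

theorem lemma2:
  fixes n :: nat and f :: "real list \<Rightarrow> real" and a :: "real list"
  assumes "is_aggregation n f"
    and "a \<in> cube n"
    and "a \<noteq> replicate n 0"
    and "a \<noteq> replicate n 1"
  shows "is_aggregation n (hfa f a) \<and>
    (\<forall>x\<in>cube n.
       (x = replicate n 1 \<longrightarrow> hfa f a x = 1) \<and>
       (vle a x \<and> x \<noteq> replicate n 1 \<longrightarrow> hfa f a x = f a) \<and>
       (\<not> vle a x \<longrightarrow> hfa f a x = 0))"
proof -
  have fa: "f a \<in> {0..1}"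
    using assms(1,2) by (simp add: is_aggregation_def)
  have la: "length a = n"
    using assms(2) by (simp add: cube_def)
  have h: "hfa f a x = step_at a (f a) x" if "x \<in> cube n" for x
    using hfa_eq_step_at assms(2,3) fa that .
  have "is_aggregation n (hfa f a)"
    using is_aggregation_cong h is_aggregation_step_at assms(2,3) fa by blast
  moreover have "\<forall>x\<in>cube n. \<not> vle a x \<longrightarrow> x \<noteq> replicate n 1"
    using assms(2) vle_replicate_one by blast
  ultimately show ?thesis
    using h la by (auto simp: step_at_def)
qed

end
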